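(* Let $\gamma\in(1,3]$ and $m\in\{1,2\}$. Let $P_*=(V_*,C_* )$ be either $P_8$ with $z\in(0,z_M]$, or $P_6$ with $z\in[z_m,z_M]$. Then the quadratic equation in $c$ $$-G_C(V_*,C_* )c^2+\big(F_C(V_*,C_* )-G_V(V_*,C_* )\big)c+F_V(V_*,C_* )=0$$ has two real roots of opposite signs (in particular, at $P_8$ the discriminant $R^2=(F_C-G_V)^2+4F_VG_C$ is strictly positive). Hence there is exactly one negative root, namely $c_1=\frac{F_C-G_V+R}{2G_C}<0$ with $R=\sqrt{(F_C-G_V)^2+4F_VG_C}$, all evaluated at $(V_*,C_* )$.
   Context: Fix $m\in\{1,2\}$ and $\gamma\in(1,3]$. For $z>0$ put $\lambda=1+m\gamma z$, $a_1=1+\frac{m(\gamma-1)}{2}$, $a_2=\frac{m(\gamma-1)+mz\gamma(\gamma-3)}{2}$, $a_3=\frac{mz\gamma(\gamma-1)}{2}$, $G(V,C;\gamma,z)=C^2[(m+1)V+2mz]-V(1+V)(\lambda+V)$, $F(V,C;\gamma,z)=C\{C^2[1+\frac{mz}{1+V}]-a_1(1+V)^2+a_2(1+V)-a_3\}$; $F_C,F_V,G_C,G_V$ denote partial derivatives in $C$ and $V$. $z_M=(\sqrt\gamma+\sqrt2)^{-2}$, $z_m=\frac{\gamma-1}{(2\gamma-1)(\gamma+1)}$; for $z\in(0,z_M]$, $w(z)=\sqrt{1-2(\gamma+2)z+(\gamma-2)^2z^2}$, $V_6=\frac{-1+(\gamma-2)z-w}{2}$, $C_6=1+V_6$, $V_8=\frac{-1+(\gamma-2)z+w}{2}$,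 $C_8=1+V_8$, $P_6=(V_6,C_6)$, $P_8=(V_8,C_8)$. *)

theory Defs
  imports "HOL-Analysis.Analysis"
begin

definition lam :: "real \<Rightarrow> real \<Rightarrow> real \<Rightarrow> real" where
  "lam m \<gamma> z = 1 + m * \<gamma> * z"
definition a1 :: "real \<Rightarrow> real \<Rightarrow> real" where
  "a1 m \<gamma> = 1 + m * (\<gamma> - 1) / 2"
definition a2 :: "real \<Rightarrow> real \<Rightarrow> real \<Rightarrow> real" where
  "a2 m \<gamma> z = (m * (\<gamma> - 1) + m * z * \<gamma> * (\<gamma> - 3)) / 2"
definition a3 :: "real \<Rightarrow> real \<Rightarrow> real \<Rightarrow> real" where
  "a3 m \<gamma> z = m * z * \<gamma> * (\<gamma> - 1) / 2"

definition GG :: "real \<Rightarrow> real \<Rightarrow> real \<Rightarrow> real \<Rightarrow> real \<Rightarrow> real" where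
  "GG m \<gamma> z V C = C^2 * ((m + 1) * V + 2 * m * z) - V * (1 + V) * (lam m \<gamma> z + V)"
definition FF :: "real \<Rightarrow> real \<Rightarrow> real \<Rightarrow> real \<Rightarrow> real \<Rightarrow> real" where
  "FF m \<gamma> z V C = C * (C^2 * (1 + m * z / (1 + V)) - a1 m \<gamma> * (1 + V)^2
      + a2 m \<gamma> z * (1 + V) - a3 m \<gamma> z)"

definition FC where "FC m \<gamma> z V C = deriv (\<lambda>c. FF m \<gamma> z V c) C"
definition FV where "FV m \<gamma> z V C = deriv (\<lambda>v. FF m \<gamma> z v C) V"
definition GC where "GC m \<gamma> z V C = deriv (\<lambda>c. GG m \<gamma> z V c) C"
definition GVd where "GVd m \<gamma> z V C = deriv (\<lambda>v. GG m \<gamma> z v C) V"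

definition zM :: "real \<Rightarrow> real" where "zM \<gamma> = 1 / (sqrt \<gamma> + sqrt 2)^2"
definition zm :: "real \<Rightarrow> real" where "zm \<gamma> = (\<gamma> - 1) / ((2 * \<gamma> - 1) * (\<gamma> + 1))"
definition ww :: "real \<Rightarrow> real \<Rightarrow> real" where
  "ww \<gamma> z = sqrt (1 - 2 * (\<gamma> + 2) * z + (\<gamma> - 2)^2 * z^2)"
definition V6 where "V6 \<gamma> z = (-1 + (\<gamma> - 2) * z - ww \<gamma> z) / 2"
definition C6 where "C6 \<gamma> z = 1 + V6 \<gamma> z"
definition V8 where "V8 \<gamma> z = (-1 + (\<gamma> - 2) * z + ww \<gamma> z) / 2"
definition C8 where "C8 \<gamma> z = 1 + V8 \<gamma> z"

end

theory Submission
  imports Defs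
begin

text \<open>
  At both points \<open>G\<^sub>C < 0\<close> and \<open>F\<^sub>V < 0\<close>, so the quadratic \<open>-G\<^sub>C c\<^sup>2 + (F\<^sub>C - G\<^sub>V) c + F\<^sub>V\<close>
  opens upwards and is negative at \<open>c = 0\<close>; its roots are therefore real and of opposite
  signs. The points lie on the line \<open>C = 1 + V\<close>, where \<open>C\<^sub>6 \<le> C\<^sub>8\<close> are the roots of
  \<open>p(C) = C\<^sup>2 - (1 + (\<gamma> - 2) z) C + \<gamma> z\<close>. There \<open>G\<^sub>C = 2C((m+1)V + 2mz)\<close> is negative because
  \<open>V\<close> is small and negative, and \<open>F\<^sub>V = 2a\<^sub>1 C (c\<^sub>F - C)\<close> for a threshold \<open>c\<^sub>F\<close>
  (\<open>FV_threshold\<close>) lying below the midpoint of the two roots. This settles \<open>P\<^sub>8\<close>; for \<open>P\<^sub>6\<close>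
  one also needs \<open>p(c\<^sub>F) > 0\<close>, which after clearing denominators is a convex quadratic
  in \<open>z\<close> that is negative at \<open>z = 0\<close> and positive at \<open>z = z\<^sub>m\<close>.
\<close>

lemma quadratic_roots_opposite_signs:
  fixes g f b :: real
  assumes hg: "g < 0" and hf: "f < 0"
  shows "g \<noteq> 0 \<and> b^2 + 4*f*g > 0
     \<and> (\<exists>r1 r2. r1 < 0 \<and> 0 < r2 \<and> {c. - g * c^2 + b * c + f = 0} = {r1, r2})
     \<and> (b + sqrt (b^2 + 4*f*g)) / (2*g) < 0
     \<and> {c. - g * c^2 + b * c + f = 0 \<and> c < 0} = {(b + sqrt (b^2 + 4*f*g)) / (2*g)}"
proof -
  define R where "R = sqrt (b^2 + 4*f*g)"
  have fg: "f*g > 0" using hg hf by (simp add: mult_neg_neg)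
  then have disc: "b^2 + 4*f*g > 0" by (intro add_nonneg_pos) auto
  have R2: "R^2 = b^2 + 4*f*g" unfolding R_def using disc by simp
  have Rb: "R > \<bar>b\<bar>"
    unfolding R_def using fg by (intro real_less_rsqrt) simp
  define r1 where "r1 = (b + R) / (2*g)"
  define r2 where "r2 = (b - R) / (2*g)"
  have r1: "r1 < 0" unfolding r1_def using Rb hg by (intro divide_pos_neg) auto
  have r2: "r2 > 0" unfolding r2_def using Rb hg by (intro divide_neg_neg) auto
  have factor: "- g * c^2 + b * c + f = - g * (c - r1) * (c - r2)" for c
  proof -
    have "- g * (c - r1) * (c - r2) = - g * c^2 + b*c - (b^2 - R^2)/(4*g)"
      unfolding r1_def r2_def using hg by (simp add: field_simps power2_eq_square)
    also have "\<dots> = - g * c^2 + b * c + f" using R2 hg by (simp add: field_simps)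
    finally show ?thesis by simp
  qed
  have roots: "{c. - g * c^2 + b * c + f = 0} = {r1, r2}"
    unfolding factor using hg by auto
  then have "{c. - g * c^2 + b * c + f = 0 \<and> c < 0} = {r1}"
    using r1 r2 by auto
  then show ?thesis using hg disc roots r1 r2 unfolding R_def[symmetric] r1_def[symmetric] by blast
qed

lemma below_smaller_root:
  fixes s q C x :: real
  assumes root: "C^2 - s*C + q = 0" and smaller: "2*C \<le> s"
    and below_mid: "2*x < s" and pos: "0 < x^2 - s*x + q"
  shows "x < C"
proof -
  have "0 < (x - C) * (x + C - s)"
    using root pos by (simp add: algebra_simps power2_eq_square)
  moreover have "x + C - s < 0" using smaller below_mid by linarith
  ultimately show ?thesis by (simp add: zero_less_mult_iff)
qed

lemma root_of_monic_quadratic: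
  fixes s q w C :: real
  assumes "w^2 = s^2 - 4*q" and "2*C = s + w \<or> 2*C = s - w"
  shows "C^2 - s*C + q = 0"
proof -
  have "(2*C - s)^2 = w^2" using assms(2) by auto
  then have "4*(C^2 - s*C + q) = 0" using assms(1) by (simp add: algebra_simps power2_eq_square)
  then show ?thesis by simp
qed

lemma convex_quadratic_pos_beyond:
  fixes f :: "real \<Rightarrow> real" and A B z0 z :: real
  assumes f: "\<And>x. f x = A*x^2 + B*x + f 0" and A: "0 \<le> A"
    and f0: "f 0 < 0" and fz0: "0 < f z0" and z0: "0 < z0" "z0 \<le> z"
  shows "0 < f z"
proof -
  have chord: "z0 * f z = z * f z0 - (z - z0) * f 0 + A * z0 * z * (z - z0)"
    by (subst (1 2) f) (simp add: algebra_simps power2_eq_square)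
  have "0 < z * f z0" using z0 fz0 by simp
  moreover have "(z - z0) * f 0 \<le> 0" using z0 f0 by (simp add: mult_nonneg_nonpos)
  moreover have "0 \<le> A * z0 * z * (z - z0)" using A z0 by simp
  ultimately have "0 < z0 * f z" unfolding chord by linarith
  then show ?thesis using z0 by (simp add: zero_less_mult_iff)
qed

lemma GC_eq: "GC m \<gamma> z V C = 2*C*((m+1)*V + 2*m*z)"
proof -
  have "((\<lambda>c. GG m \<gamma> z V c) has_field_derivative (2*C*((m+1)*V + 2*m*z))) (at C)"
    unfolding GG_def by (auto intro!: derivative_eq_intros simp: power2_eq_square)
  then show ?thesis unfolding GC_def by (rule DERIV_imp_deriv)
qed

lemma FV_eq:
  assumes "1 + V \<noteq> 0"
  shows "FV m \<gamma> z V C = C * (C^2 * (- m*z/(1+V)^2) - 2 * a1 m \<gamma> * (1+V) + a2 m \<gamma> z)"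
proof -
  have "((\<lambda>v. FF m \<gamma> z v C) has_field_derivative
          C * (C^2 * (- m*z/(1+V)^2) - 2 * a1 m \<gamma> * (1+V) + a2 m \<gamma> z)) (at V)"
    unfolding FF_def using assms
    by (auto intro!: derivative_eq_intros) (simp add: field_simps power2_eq_square)
  then show ?thesis unfolding FV_def by (rule DERIV_imp_deriv)
qed

lemma zM_less_quarter:
  assumes "1 < \<gamma>"
  shows "zM \<gamma> < 1/4"
proof -
  have "2 < sqrt \<gamma> + sqrt 2" using assms by (smt (verit) real_sqrt_gt_1_iff)
  then have "2^2 < (sqrt \<gamma> + sqrt 2)^2" by (intro power_strict_mono) auto
  then show ?thesis unfolding zM_def by (simp add: divide_less_eq)
qed

lemma ww_radicand_nonneg:
  fixes \<gamma> z :: real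
  assumes "0 \<le> \<gamma>" "0 \<le> z" "z \<le> zM \<gamma>"
  shows "0 \<le> 1 - 2*(\<gamma>+2)*z + (\<gamma>-2)^2*z^2"
proof -
  define s t where "s = sqrt \<gamma>" and "t = sqrt 2"
  have st: "0 \<le> s" "0 \<le> t" "s^2 = \<gamma>" "t^2 = 2" unfolding s_def t_def using assms by auto
  have plus: "0 \<le> 1 - z*(s+t)^2"
  proof (cases "s + t = 0")
    case False
    then show ?thesis using assms(3) st unfolding zM_def s_def[symmetric] t_def[symmetric]
      by (simp add: le_divide_eq mult.commute)
  qed simp
  have "(s-t)^2 \<le> (s+t)^2" using st by (simp add: power2_eq_square algebra_simps)
  then have "z*(s-t)^2 \<le> z*(s+t)^2" using assms(2) by (rule mult_left_mono)
  then have minus: "0 \<le> 1 - z*(s-t)^2" using plus by linarith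
  have "(1 - z*(s+t)^2)*(1 - z*(s-t)^2) = 1 - 2*(s^2+t^2)*z + (s^2-t^2)^2*z^2"
    by (simp add: algebra_simps power2_eq_square)
  then show ?thesis using mult_nonneg_nonneg[OF plus minus] st(3,4) by simp
qed

lemma ww_square:
  assumes "0 \<le> 1 - 2*(\<gamma>+2)*z + (\<gamma>-2)^2*z^2"
  shows "(ww \<gamma> z)^2 = (1 + (\<gamma>-2)*z)^2 - 4*(\<gamma>*z)"
  using assms unfolding ww_def by (simp add: algebra_simps power2_eq_square)

lemma zm_pos: "1 < \<gamma> \<Longrightarrow> 0 < zm \<gamma>"
  unfolding zm_def by simp

lemma root_sum_pos:
  fixes \<gamma> z :: real
  assumes "1 \<le> \<gamma>" "0 \<le> z" "z < 1"
  shows "0 < 1 + (\<gamma>-2)*z"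
proof -
  have "0 \<le> (\<gamma>-1)*z" using assms by simp
  then show ?thesis using assms by (simp add: algebra_simps)
qed

lemma C8_eq: "2 * C8 \<gamma> z = 1 + (\<gamma>-2)*z + ww \<gamma> z"
  unfolding C8_def V8_def by (simp add: field_simps)

lemma C6_eq: "2 * C6 \<gamma> z = 1 + (\<gamma>-2)*z - ww \<gamma> z"
  unfolding C6_def V6_def by (simp add: field_simps)

definition FV_threshold :: "real \<Rightarrow> real \<Rightarrow> real \<Rightarrow> real" where
  "FV_threshold m \<gamma> z = (a2 m \<gamma> z - m*z) / (2 * a1 m \<gamma>)"

definition threshold_poly :: "real \<Rightarrow> real \<Rightarrow> real \<Rightarrow> real" where
  "threshold_poly m \<gamma> z = (a2 m \<gamma> z - m*z)^2 - (1 + (\<gamma>-2)*z) * (a2 m \<gamma> z - m*z) * (2*a1 m \<gamma>)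
     + \<gamma>*z*(2*a1 m \<gamma>)^2"

lemma a1_pos: "0 < m \<Longrightarrow> 1 < \<gamma> \<Longrightarrow> 0 < a1 m \<gamma>"
  unfolding a1_def by (simp add: add_pos_nonneg)

lemma FV_on_diagonal:
  assumes "0 < m" "1 < \<gamma>" "0 < C"
  shows "FV m \<gamma> z (C - 1) C = 2 * a1 m \<gamma> * C * (FV_threshold m \<gamma> z - C)"
proof -
  have "FV m \<gamma> z (C - 1) C = C * (a2 m \<gamma> z - m*z - 2 * a1 m \<gamma> * C)"
    using FV_eq[of "C - 1" m \<gamma> z C] assms(3) by (simp add: field_simps power2_eq_square)
  moreover have "2 * a1 m \<gamma> * C * (FV_threshold m \<gamma> z - C) = C * (a2 m \<gamma> z - m*z - 2 * a1 m \<gamma> * C)"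
    using a1_pos[OF assms(1,2)] unfolding FV_threshold_def by (simp add: field_simps)
  ultimately show ?thesis by linarith
qed

lemma FV_threshold_below_midpoint:
  assumes "1 \<le> m" "1 < \<gamma>" "0 \<le> z"
  shows "2 * FV_threshold m \<gamma> z < 1 + (\<gamma>-2)*z"
proof -
  have "2 * a1 m \<gamma> * (1 + (\<gamma>-2)*z) - 2 * (a2 m \<gamma> z - m*z) = 2 + z*(2*\<gamma> - 4 + 4*m)"
    unfolding a1_def a2_def by (simp add: field_simps power2_eq_square)
  moreover have "0 \<le> z*(2*\<gamma> - 4 + 4*m)" using assms by simp
  ultimately have "2 * (a2 m \<gamma> z - m*z) < 2 * a1 m \<gamma> * (1 + (\<gamma>-2)*z)" by linarith
  then show ?thesis using a1_pos[of m \<gamma>] assms unfolding FV_threshold_def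
    by (simp add: divide_less_eq mult.commute)
qed

lemma threshold_poly_eq:
  assumes "0 < m" "1 < \<gamma>"
  shows "threshold_poly m \<gamma> z = (2 * a1 m \<gamma>)^2 *
    ((FV_threshold m \<gamma> z)^2 - (1 + (\<gamma>-2)*z) * FV_threshold m \<gamma> z + \<gamma>*z)"
  using a1_pos[OF assms] unfolding threshold_poly_def FV_threshold_def
  by (simp add: field_simps power2_eq_square)

lemma threshold_poly_expand:
  "threshold_poly m \<gamma> z =
     m*(3*\<gamma> + 2 - \<gamma>^2)/4 * (m*(3*\<gamma> + 2 - \<gamma>^2) + 2*(\<gamma>-2)*(2 + m*(\<gamma>-1))) * z^2
   + (\<gamma>*(2 + m*(\<gamma>-1))^2 - m^2*(\<gamma>-1)*(3*\<gamma> + 2 - \<gamma>^2)/2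
      - m*((\<gamma>-2)*(\<gamma>-1) - (3*\<gamma> + 2 - \<gamma>^2))/2 * (2 + m*(\<gamma>-1))) * z
   + threshold_poly m \<gamma> 0"
  unfolding threshold_poly_def a1_def a2_def by (simp add: field_simps power2_eq_square)

lemma threshold_poly_zero_neg:
  assumes "0 < m" "1 < \<gamma>"
  shows "threshold_poly m \<gamma> 0 < 0"
proof -
  have "threshold_poly m \<gamma> 0 = (m*(\<gamma>-1)/2) * (- 2 - m*(\<gamma>-1)/2)"
    unfolding threshold_poly_def a1_def a2_def by (simp add: field_simps power2_eq_square)
  also have "\<dots> < 0"
  proof -
    have "0 < m*(\<gamma>-1)" using assms by simp
    then show ?thesis by (intro mult_pos_neg) simp_all
  qed
  finally show ?thesis .
qed

lemma threshold_poly_leading_coeff_nonneg: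
  fixes m \<gamma> :: real
  assumes hm: "m = 1 \<or> m = 2" and h\<gamma>: "1 < \<gamma>" "\<gamma> \<le> 3"
  shows "0 \<le> m*(3*\<gamma> + 2 - \<gamma>^2)/4 * (m*(3*\<gamma> + 2 - \<gamma>^2) + 2*(\<gamma>-2)*(2 + m*(\<gamma>-1)))"
proof -
  have "0 \<le> \<gamma>*(3-\<gamma>)" using h\<gamma> by simp
  then have \<rho>: "0 < 3*\<gamma> + 2 - \<gamma>^2" by (simp add: algebra_simps power2_eq_square)
  have "0 < m*(3*\<gamma> + 2 - \<gamma>^2) + 2*(\<gamma>-2)*(2 + m*(\<gamma>-1))"
  proof (cases "m = 1")
    case True
    have "0 < (\<gamma>+2)*(\<gamma>-1)" using h\<gamma> by simp
    then show ?thesis unfolding True by (simp add: algebra_simps power2_eq_square)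
  next
    case False
    then have "m = 2" using hm by simp
    have "0 < \<gamma>*(\<gamma>-1)" using h\<gamma> by simp
    then show ?thesis unfolding \<open>m = 2\<close> by (simp add: algebra_simps power2_eq_square)
  qed
  then show ?thesis using hm \<rho> by auto
qed

lemma threshold_poly_scaled:
  assumes "z * d = \<gamma> - 1"
  shows "threshold_poly m \<gamma> z * d^2
    = (m*((\<gamma>-1)*d - (\<gamma>-1)*(3*\<gamma> + 2 - \<gamma>^2))/2)^2
      - (d + (\<gamma>-2)*(\<gamma>-1)) * (m*((\<gamma>-1)*d - (\<gamma>-1)*(3*\<gamma> + 2 - \<gamma>^2))/2) * (2 + m*(\<gamma>-1))
      + \<gamma>*(\<gamma>-1)*d*(2 + m*(\<gamma>-1))^2"
proof -
  have "threshold_poly m \<gamma> z * d^2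
    = (m*((\<gamma>-1)*d - (z*d)*(3*\<gamma> + 2 - \<gamma>^2))/2)^2
      - (d + (\<gamma>-2)*(z*d)) * (m*((\<gamma>-1)*d - (z*d)*(3*\<gamma> + 2 - \<gamma>^2))/2) * (2 + m*(\<gamma>-1))
      + \<gamma>*(z*d)*d*(2 + m*(\<gamma>-1))^2"
    unfolding threshold_poly_def a1_def a2_def by (simp add: field_simps power2_eq_square)
  then show ?thesis unfolding assms .
qed

lemma threshold_poly_zm_pos:
  assumes hm: "m = 1 \<or> m = 2" and h\<gamma>: "1 < \<gamma>" "\<gamma> \<le> 3"
  shows "threshold_poly m \<gamma> (zm \<gamma>) > 0"
proof -
  define k where "k = \<gamma> - 1"
  define d where "d = (2*\<gamma> - 1)*(\<gamma> + 1)"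
  have k: "0 < k" "k \<le> 2" using h\<gamma> k_def by auto
  have d: "0 < d" unfolding d_def using h\<gamma> by simp
  have k_powers: "0 \<le> k^2" "0 \<le> k^3" "0 \<le> k^4" "0 \<le> k^5" "k^6 \<le> 4*k^4"
  proof -
    show "0 \<le> k^2" "0 \<le> k^3" "0 \<le> k^4" "0 \<le> k^5" using k by auto
    have "k^4 * k^2 \<le> k^4 * 2^2" using k by (intro mult_left_mono power_mono) auto
    then show "k^6 \<le> 4*k^4" by (simp add: power_add[symmetric] mult.commute)
  qed
  have "zm \<gamma> * d = \<gamma> - 1" using h\<gamma> unfolding zm_def d_def by simp
  note scaled = threshold_poly_scaled[OF this, of m]
  have "threshold_poly m \<gamma> (zm \<gamma>) * d^2 > 0"
  proof (cases "m = 1")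
    case True
    have "threshold_poly m \<gamma> (zm \<gamma>) * d^2 = 12*k + 39*k^2 + 38*k^3 + 12*k^4 - k^6/4"
      unfolding scaled unfolding True d_def k_def by algebra
    then show ?thesis using k k_powers by linarith
  next
    case False
    then have "m = 2" using hm by simp
    have "threshold_poly m \<gamma> (zm \<gamma>) * d^2 = 16*k + 56*k^2 + 44*k^3 + 16*k^4 + 2*k^5 - k^6"
      unfolding scaled unfolding \<open>m = 2\<close> d_def k_def by algebra
    then show ?thesis using k k_powers by linarith
  qed
  then show ?thesis using d by (simp add: zero_less_mult_iff)
qed

lemma threshold_poly_pos:
  assumes hm: "m = 1 \<or> m = 2" and h\<gamma>: "1 < \<gamma>" "\<gamma> \<le> 3" and z: "zm \<gamma> \<le> z"
  shows "0 < threshold_poly m \<gamma> z"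
proof (rule convex_quadratic_pos_beyond[OF threshold_poly_expand])
  show "0 < threshold_poly m \<gamma> (zm \<gamma>)" using threshold_poly_zm_pos assms by blast
qed (use assms zm_pos threshold_poly_leading_coeff_nonneg threshold_poly_zero_neg in auto)

lemma C8_properties:
  assumes hm: "m = 1 \<or> m = 2" and h\<gamma>: "1 < \<gamma>" "\<gamma> \<le> 3" and z: "0 < z" "z \<le> zM \<gamma>"
  shows "(C8 \<gamma> z)^2 - (1 + (\<gamma>-2)*z) * C8 \<gamma> z + \<gamma>*z = 0"
    and "0 < C8 \<gamma> z" and "FV_threshold m \<gamma> z < C8 \<gamma> z"
proof -
  have rad: "0 \<le> 1 - 2*(\<gamma>+2)*z + (\<gamma>-2)^2*z^2" using ww_radicand_nonneg h\<gamma> z by simp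
  then show "(C8 \<gamma> z)^2 - (1 + (\<gamma>-2)*z) * C8 \<gamma> z + \<gamma>*z = 0"
    using root_of_monic_quadratic[OF ww_square[OF rad] disjI1[OF C8_eq]] by simp
  have "0 \<le> ww \<gamma> z" unfolding ww_def using rad by simp
  then have mid: "1 + (\<gamma>-2)*z \<le> 2 * C8 \<gamma> z" using C8_eq by simp
  moreover have "2 * FV_threshold m \<gamma> z < 1 + (\<gamma>-2)*z"
    using FV_threshold_below_midpoint hm h\<gamma> z by auto
  ultimately show "FV_threshold m \<gamma> z < C8 \<gamma> z" by simp
  have "0 < 1 + (\<gamma>-2)*z" using root_sum_pos h\<gamma> z zM_less_quarter[of \<gamma>] by simp
  then show "0 < C8 \<gamma> z" using mid by simp
qed

lemma C6_properties:
  assumes hm: "m = 1 \<or> m = 2" and h\<gamma>: "1 < \<gamma>" "\<gamma> \<le> 3" and z: "zm \<gamma> \<le> z" "z \<le> zM \<gamma>"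
  shows "(C6 \<gamma> z)^2 - (1 + (\<gamma>-2)*z) * C6 \<gamma> z + \<gamma>*z = 0"
    and "0 < C6 \<gamma> z" and "FV_threshold m \<gamma> z < C6 \<gamma> z"
proof -
  have z0: "0 < z" using zm_pos[OF h\<gamma>(1)] z by simp
  have rad: "0 \<le> 1 - 2*(\<gamma>+2)*z + (\<gamma>-2)^2*z^2" using ww_radicand_nonneg h\<gamma> z z0 by simp
  show root: "(C6 \<gamma> z)^2 - (1 + (\<gamma>-2)*z) * C6 \<gamma> z + \<gamma>*z = 0"
    using root_of_monic_quadratic[OF ww_square[OF rad] disjI2[OF C6_eq]] by simp
  have w: "0 \<le> ww \<gamma> z" unfolding ww_def using rad by simp
  have s: "0 < 1 + (\<gamma>-2)*z" using root_sum_pos h\<gamma> z z0 zM_less_quarter[of \<gamma>] by simp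
  have "(ww \<gamma> z)^2 < (1 + (\<gamma>-2)*z)^2" using ww_square[OF rad] h\<gamma> z0 by simp
  then have "ww \<gamma> z < 1 + (\<gamma>-2)*z" using s w by (simp add: power_less_imp_less_base)
  then show "0 < C6 \<gamma> z" using C6_eq[of \<gamma> z] by simp
  show "FV_threshold m \<gamma> z < C6 \<gamma> z"
  proof (rule below_smaller_root[OF root])
    show "2 * C6 \<gamma> z \<le> 1 + (\<gamma>-2)*z" using C6_eq[of \<gamma> z] w by simp
    show "2 * FV_threshold m \<gamma> z < 1 + (\<gamma>-2)*z"
      using FV_threshold_below_midpoint hm h\<gamma> z0 by auto
    have m: "0 < m" using hm by auto
    have "0 < threshold_poly m \<gamma> z" using threshold_poly_pos hm h\<gamma> z by blast
    then show "0 < (FV_threshold m \<gamma> z)^2 - (1 + (\<gamma>-2)*z) * FV_threshold m \<gamma> z + \<gamma>*z"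
      unfolding threshold_poly_eq[OF m h\<gamma>(1)] using a1_pos[OF m h\<gamma>(1)]
      by (simp add: zero_less_mult_iff)
  qed
qed

lemma GC_factor_neg:
  fixes m \<gamma> z C :: real
  assumes hm: "m = 1 \<or> m = 2" and h\<gamma>: "1 < \<gamma>" "\<gamma> \<le> 3" and z: "0 < z" "z < 1/4"
    and root: "C^2 - (1 + (\<gamma>-2)*z) * C + \<gamma>*z = 0"
  shows "(m+1)*(C-1) + 2*m*z < 0"
proof -
  define V b where "V = C - 1" and "b = 1 - (\<gamma>-2)*z"
  have Vroot: "V^2 + b*V + 2*z = 0"
    using root unfolding V_def b_def by (simp add: algebra_simps power2_eq_square)
  have b: "0 < b" "b < 5/4"
  proof -
    have "(\<gamma>-2)*z = (\<gamma>-1)*z - z" by (simp add: algebra_simps)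
    moreover have "0 < (\<gamma>-1)*z" "(\<gamma>-1)*z \<le> 2*z" using h\<gamma> z by auto
    ultimately show "0 < b" "b < 5/4" unfolding b_def using z by linarith+
  qed
  have V: "V < 0"
  proof (rule ccontr)
    assume "\<not> V < 0"
    then have "0 \<le> b*V" using b by simp
    moreover have "0 \<le> V^2" by simp
    ultimately show False using Vroot z by linarith
  qed
  have "(m+1)*V + 2*m*z = (m+1)*V + m*(2*z)" by simp
  also have "\<dots> = (m+1)*V + m*(-(V^2 + b*V))"
    using Vroot by (simp add: add_eq_0_iff2 add.commute)
  also have "\<dots> = V * (m + 1 - m*(V + b))" by (simp add: algebra_simps power2_eq_square)
  finally have "(m+1)*V + 2*m*z = V * (m + 1 - m*(V + b))" .
  moreover have "0 < m + 1 - m*(V + b)" using hm V b by auto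
  ultimately show ?thesis using V unfolding V_def[symmetric] by (simp add: mult_neg_pos)
qed

lemma GC_FV_neg_at_root:
  assumes hm: "m = 1 \<or> m = 2" and h\<gamma>: "1 < \<gamma>" "\<gamma> \<le> 3" and z: "0 < z" "z < 1/4"
    and root: "C^2 - (1 + (\<gamma>-2)*z) * C + \<gamma>*z = 0" and C: "0 < C"
    and threshold: "FV_threshold m \<gamma> z < C"
  shows "GC m \<gamma> z (C - 1) C < 0" and "FV m \<gamma> z (C - 1) C < 0"
proof -
  show "GC m \<gamma> z (C - 1) C < 0"
    using GC_factor_neg[OF hm h\<gamma> z root] C unfolding GC_eq by (simp add: mult_pos_neg)
  have m: "0 < m" using hm by auto
  have "0 < 2 * a1 m \<gamma> * C" using a1_pos[OF m h\<gamma>(1)] C by simp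
  then show "FV m \<gamma> z (C - 1) C < 0"
    using threshold unfolding FV_on_diagonal[OF m h\<gamma>(1) C] by (simp add: mult_pos_neg)
qed

theorem mainTheorem3:
  fixes m \<gamma> z Vs Cs :: real
  assumes hm: "m = 1 \<or> m = 2"
    and h\<gamma>: "1 < \<gamma>" "\<gamma> \<le> 3"
    and hP: "(0 < z \<and> z \<le> zM \<gamma> \<and> Vs = V8 \<gamma> z \<and> Cs = C8 \<gamma> z)
           \<or> (zm \<gamma> \<le> z \<and> z \<le> zM \<gamma> \<and> Vs = V6 \<gamma> z \<and> Cs = C6 \<gamma> z)"
  shows "let Fc = FC m \<gamma> z Vs Cs; Fv = FV m \<gamma> z Vs Cs;
             Gc = GC m \<gamma> z Vs Cs; Gv = GVd m \<gamma> z Vs Cs;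
             q = (\<lambda>c. - Gc * c^2 + (Fc - Gv) * c + Fv);
             R = sqrt ((Fc - Gv)^2 + 4 * Fv * Gc);
             c1 = (Fc - Gv + R) / (2 * Gc)
         in Gc \<noteq> 0
            \<and> (Fc - Gv)^2 + 4 * Fv * Gc > 0
            \<and> (\<exists>r1 r2. r1 < 0 \<and> 0 < r2 \<and> {c. q c = 0} = {r1, r2})
            \<and> c1 < 0 \<and> {c. q c = 0 \<and> c < 0} = {c1}"
proof -
  have z: "0 < z" "z < 1/4" using hP zm_pos[OF h\<gamma>(1)] zM_less_quarter[OF h\<gamma>(1)] by auto
  have V: "Vs = Cs - 1" using hP unfolding C8_def C6_def by auto
  have "Cs^2 - (1 + (\<gamma>-2)*z) * Cs + \<gamma>*z = 0 \<and> 0 < Cs \<and> FV_threshold m \<gamma> z < Cs"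
    using hP C8_properties[OF hm h\<gamma>] C6_properties[OF hm h\<gamma>] by blast
  then have "GC m \<gamma> z Vs Cs < 0" "FV m \<gamma> z Vs Cs < 0"
    using GC_FV_neg_at_root[OF hm h\<gamma> z] unfolding V by auto
  from quadratic_roots_opposite_signs[OF this, of "FC m \<gamma> z Vs Cs - GVd m \<gamma> z Vs Cs"]
  show ?thesis unfolding Let_def by simp
qed

end
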